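(* Let $G$ be a $d$-regular graph with a vertex $u$. The vertices $(0,u)$ and $(1,u)$ are strongly cospectral (with respect to the Laplacian) in $\uparrow^{2}G$ if and only if $d\notin\sigma_u(G)$. In particular, for any vertex $u$, the vertices $(0,u)$ and $(1,u)$ are strongly cospectral in: (i) $\uparrow^{2}K_{d+1}$ for all $d\geq 1$; (ii) $\uparrow^{2}C_n$ if and only if $n\not\equiv 0 \pmod 4$; (iii) $\uparrow^{2}Q_d$ if and only if $d$ is odd.
   Context: All graphs are simple, undirected and unweighted. For a graph $X$ with Laplacian $L=D-A$, spectral decomposition $L=\sum_\lambda \lambda E_\lambda$ over its distinct eigenvalues ($E_\lambda$ orthogonal eigenprojections), the eigenvalue support of a vertex $u$ is $\sigma_u(X)=\{\lambda:E_\lambda\mathbf{e}_u\neq\mathbf{0}\}$; vertices $u,v$ are strongly cospectral if $E_\lambda\mathbf{e}_u=\pm E_\lambda\mathbf{e}_v$ for all $\lambda\in\sigma_u(X)$. The blow-up $\uparrow^{2}G$ has vertex set $\mathbb{Z}_2\times V(G)$, with $(l,u)\sim(m,v)$ iff $u\sim v$ in $G$. $K_n$ is the complete graph, $C_n$ the $n$-cycle, $Q_d$ the $d$-dimensional hypercube. *)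

theory Defs
  imports "HOL-Analysis.Analysis"
begin

definition simple_graph :: "'a set \<Rightarrow> ('a \<Rightarrow> 'a \<Rightarrow> bool) \<Rightarrow> bool" where
  "simple_graph V E \<longleftrightarrow> finite V \<and> (\<forall>x y. E x y \<longrightarrow> x \<in> V \<and> y \<in> V)
     \<and> (\<forall>x y. E x y \<longrightarrow> E y x) \<and> (\<forall>x. \<not> E x x)"

definition degree :: "'a set \<Rightarrow> ('a \<Rightarrow> 'a \<Rightarrow> bool) \<Rightarrow> 'a \<Rightarrow> nat" where
  "degree V E u = card {v \<in> V. E u v}"

definition regular :: "'a set \<Rightarrow> ('a \<Rightarrow> 'a \<Rightarrow> bool) \<Rightarrow> nat \<Rightarrow> bool" where
  "regular V E d \<longleftrightarrow> (\<forall>u \<in> V. degree V E u = d)"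

definition laplacian :: "'a set \<Rightarrow> ('a \<Rightarrow> 'a \<Rightarrow> bool) \<Rightarrow> 'a \<Rightarrow> 'a \<Rightarrow> real" where
  "laplacian V E u v = (if u = v then real (degree V E u) else 0) - (if E u v then 1 else 0)"

definition vecs :: "'a set \<Rightarrow> ('a \<Rightarrow> real) set" where
  "vecs V = {x. \<forall>w. w \<notin> V \<longrightarrow> x w = 0}"

definition inner_V :: "'a set \<Rightarrow> ('a \<Rightarrow> real) \<Rightarrow> ('a \<Rightarrow> real) \<Rightarrow> real" where
  "inner_V V x y = (\<Sum>w\<in>V. x w * y w)"

definition lap_mult :: "'a set \<Rightarrow> ('a \<Rightarrow> 'a \<Rightarrow> bool) \<Rightarrow> ('a \<Rightarrow> real) \<Rightarrow> 'a \<Rightarrow> real" where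
  "lap_mult V E x = (\<lambda>u. if u \<in> V then (\<Sum>v\<in>V. laplacian V E u v * x v) else 0)"

definition eigenspace_L :: "'a set \<Rightarrow> ('a \<Rightarrow> 'a \<Rightarrow> bool) \<Rightarrow> real \<Rightarrow> ('a \<Rightarrow> real) set" where
  "eigenspace_L V E c = {x \<in> vecs V. lap_mult V E x = (\<lambda>u. c * x u)}"

definition is_L_eigenvalue :: "'a set \<Rightarrow> ('a \<Rightarrow> 'a \<Rightarrow> bool) \<Rightarrow> real \<Rightarrow> bool" where
  "is_L_eigenvalue V E c \<longleftrightarrow> (\<exists>x \<in> eigenspace_L V E c. x \<noteq> (\<lambda>_. 0))"

definition eigproj :: "'a set \<Rightarrow> ('a \<Rightarrow> 'a \<Rightarrow> bool) \<Rightarrow> real \<Rightarrow> ('a \<Rightarrow> real) \<Rightarrow> ('a \<Rightarrow> real)" where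
  "eigproj V E c y = (THE p. p \<in> eigenspace_L V E c
      \<and> (\<forall>z \<in> eigenspace_L V E c. inner_V V (\<lambda>w. y w - p w) z = 0))"

definition unit_vec :: "'a \<Rightarrow> 'a \<Rightarrow> real" where
  "unit_vec u = (\<lambda>w. if w = u then 1 else 0)"

definition eig_support :: "'a set \<Rightarrow> ('a \<Rightarrow> 'a \<Rightarrow> bool) \<Rightarrow> 'a \<Rightarrow> real set" where
  "eig_support V E u = {c. is_L_eigenvalue V E c \<and> eigproj V E c (unit_vec u) \<noteq> (\<lambda>_. 0)}"

definition strongly_cospectral :: "'a set \<Rightarrow> ('a \<Rightarrow> 'a \<Rightarrow> bool) \<Rightarrow> 'a \<Rightarrow> 'a \<Rightarrow> bool" where
  "strongly_cospectral V E u v \<longleftrightarrow>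
     (\<forall>c \<in> eig_support V E u.
        eigproj V E c (unit_vec u) = eigproj V E c (unit_vec v)
      \<or> eigproj V E c (unit_vec u) = (\<lambda>w. - eigproj V E c (unit_vec v) w))"

definition blowup2_V :: "'a set \<Rightarrow> (nat \<times> 'a) set" where
  "blowup2_V V = {0::nat, 1} \<times> V"

definition blowup2_E :: "('a \<Rightarrow> 'a \<Rightarrow> bool) \<Rightarrow> nat \<times> 'a \<Rightarrow> nat \<times> 'a \<Rightarrow> bool" where
  "blowup2_E E = (\<lambda>(l, u) (m, v). l \<in> {0, 1} \<and> m \<in> {0, 1} \<and> E u v)"

definition complete_V :: "nat \<Rightarrow> nat set" where "complete_V n = {0..<n}"
definition complete_E :: "nat \<Rightarrow> nat \<Rightarrow> nat \<Rightarrow> bool" where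
  "complete_E n x y \<longleftrightarrow> x < n \<and> y < n \<and> x \<noteq> y"

text \<open>Cycle C_n on {0..<n} (meant for n \<ge> 3): i ~ i+1 mod n.\<close>
definition cycle_V :: "nat \<Rightarrow> nat set" where "cycle_V n = {0..<n}"
definition cycle_E :: "nat \<Rightarrow> nat \<Rightarrow> nat \<Rightarrow> bool" where
  "cycle_E n x y \<longleftrightarrow> x < n \<and> y < n \<and> x \<noteq> y \<and> (y = (x + 1) mod n \<or> x = (y + 1) mod n)"

text \<open>Hypercube Q_d: vertices are subsets of {0..<d} (i.e. 0/1 vectors of length d),
  adjacent iff they differ in exactly one coordinate.\<close>
definition cube_V :: "nat \<Rightarrow> nat set set" where "cube_V d = Pow {0..<d}"
definition cube_E :: "nat \<Rightarrow> nat set \<Rightarrow> nat set \<Rightarrow> bool" where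
  "cube_E d A B \<longleftrightarrow> A \<in> cube_V d \<and> B \<in> cube_V d \<and> card ((A - B) \<union> (B - A)) = 1"

end

theory Submission
  imports Defs
begin

text \<open>The Laplacian of the blow-up acts on layer-symmetric vectors (x, x) as 2 L_G and on
  antisymmetric vectors (x, -x) as multiplication by 2d. Hence e_(0,u) and e_(1,u) have equal
  eigenprojections for every eigenvalue other than 2d, while for 2d their projections differ by
  the antisymmetric vector (e_u, -e_u). They are negatives of each other iff the d-eigenprojection
  of e_u in G vanishes, i.e. iff every vector in the kernel of the adjacency matrix of G vanishes
  at u. This kernel is trivial for K_(d+1). For C_n it contains v \<mapsto> cos (\<pi> (v - u) / 2) when
  4 divides n and is trivial otherwise. For Q_d all adjacency eigenvalues have the parity of d,
  and for even d the character A \<mapsto> (-1)^|A \<inter> {0..<d/2}| lies in the kernel.\<close>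

section \<open>Orthogonal projections\<close>

lemma inner_V_diff_left: "inner_V V (\<lambda>w. a w - b w) z = inner_V V a z - inner_V V b z"
  by (simp add: inner_V_def sum_subtractf left_diff_distrib)

lemma inner_V_add_right: "inner_V V z (\<lambda>w. a w + b w) = inner_V V z a + inner_V V z b"
  by (simp add: inner_V_def sum.distrib distrib_left)

lemma inner_V_scale_left: "inner_V V (\<lambda>w. c * a w) z = c * inner_V V a z"
  by (simp add: inner_V_def sum_distrib_left mult.assoc)

lemma inner_V_scale_right: "inner_V V z (\<lambda>w. c * a w) = c * inner_V V z a"
  by (simp add: inner_V_def sum_distrib_left mult.left_commute)

lemma inner_V_commute: "inner_V V a b = inner_V V b a"
  by (simp add: inner_V_def mult.commute)

lemma inner_V_unit_vec_left:
  assumes "finite V" "u \<in> V"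
  shows "inner_V V (unit_vec u) x = x u"
proof -
  have "inner_V V (unit_vec u) x = (\<Sum>w\<in>V. if w = u then x w else 0)"
    unfolding inner_V_def unit_vec_def by (intro sum.cong) auto
  then show ?thesis using assms by simp
qed

lemma inner_V_self_pos:
  assumes "finite V" "w \<in> V" "r w \<noteq> 0"
  shows "inner_V V r r > 0"
proof -
  have "r w * r w \<le> inner_V V r r"
    unfolding inner_V_def using assms by (intro member_le_sum) auto
  moreover have "r w * r w > 0" using assms(3) not_real_square_gt_zero by blast
  ultimately show ?thesis by linarith
qed

lemma inner_V_self_eq_0:
  assumes "finite V" "r \<in> vecs V" "inner_V V r r = 0"
  shows "r = (\<lambda>_. 0)"
proof
  fix w
  show "r w = 0"
    using assms inner_V_self_pos[OF assms(1), of w r] by (cases "w \<in> V") (auto simp: vecs_def)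
qed

definition vec_subspace :: "'a set \<Rightarrow> ('a \<Rightarrow> real) set \<Rightarrow> bool" where
  "vec_subspace V S \<longleftrightarrow> S \<subseteq> vecs V \<and> (\<lambda>_. 0) \<in> S
     \<and> (\<forall>x\<in>S. \<forall>y\<in>S. (\<lambda>w. x w + y w) \<in> S) \<and> (\<forall>a. \<forall>x\<in>S. (\<lambda>w. a * x w) \<in> S)"

lemma vec_subspace_add: "vec_subspace V S \<Longrightarrow> x \<in> S \<Longrightarrow> y \<in> S \<Longrightarrow> (\<lambda>w. x w + y w) \<in> S"
  by (simp add: vec_subspace_def)

lemma vec_subspace_scale: "vec_subspace V S \<Longrightarrow> x \<in> S \<Longrightarrow> (\<lambda>w. a * x w) \<in> S"
  by (simp add: vec_subspace_def)

lemma vec_subspace_diff: "vec_subspace V S \<Longrightarrow> x \<in> S \<Longrightarrow> y \<in> S \<Longrightarrow> (\<lambda>w. x w - y w) \<in> S"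
  using vec_subspace_add[of V S x "\<lambda>w. -1 * y w"] vec_subspace_scale[of V S y "-1"] by simp

definition is_orth_proj :: "'a set \<Rightarrow> ('a \<Rightarrow> real) set \<Rightarrow> ('a \<Rightarrow> real) \<Rightarrow> ('a \<Rightarrow> real) \<Rightarrow> bool" where
  "is_orth_proj V S y p \<longleftrightarrow> p \<in> S \<and> (\<forall>z\<in>S. inner_V V (\<lambda>w. y w - p w) z = 0)"

lemma is_orth_proj_unique:
  assumes "finite V" "vec_subspace V S" "is_orth_proj V S y p" "is_orth_proj V S y q"
  shows "p = q"
proof -
  define e where "e = (\<lambda>w. p w - q w)"
  have e: "e \<in> S" unfolding e_def using assms(2-4) by (simp add: is_orth_proj_def vec_subspace_diff)
  have "(\<lambda>w. (y w - q w) - (y w - p w)) = e" unfolding e_def by auto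
  then have "inner_V V e e = inner_V V (\<lambda>w. (y w - q w) - (y w - p w)) e" by simp
  also have "\<dots> = inner_V V (\<lambda>w. y w - q w) e - inner_V V (\<lambda>w. y w - p w) e"
    by (rule inner_V_diff_left)
  also have "\<dots> = 0" using assms(3,4) e by (simp add: is_orth_proj_def)
  finally have "e = (\<lambda>_. 0)"
    using inner_V_self_eq_0[OF assms(1)] e assms(2) by (auto simp: vec_subspace_def)
  then show ?thesis unfolding e_def fun_eq_iff by simp
qed

lemma is_orth_proj_extend:
  assumes S: "vec_subspace W S" and p0: "is_orth_proj V S0 y p0" and "S0 \<subseteq> S"
    and r: "r \<in> S" "\<forall>z\<in>S0. inner_V V r z = 0"
    and decomp: "\<And>z. z \<in> S \<Longrightarrow> \<exists>z0\<in>S0. \<exists>a. z = (\<lambda>w. z0 w + a * r w)"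
    and \<beta>: "\<beta> * inner_V V r r = inner_V V y r"
  shows "is_orth_proj V S y (\<lambda>w. p0 w + \<beta> * r w)"
proof -
  let ?p = "\<lambda>w. p0 w + \<beta> * r w"
  have "p0 \<in> S" using p0 \<open>S0 \<subseteq> S\<close> by (auto simp: is_orth_proj_def)
  then have "?p \<in> S" using vec_subspace_add[OF S _ vec_subspace_scale[OF S r(1)]] by blast
  have res: "(\<lambda>w. y w - ?p w) = (\<lambda>w. (y w - p0 w) - \<beta> * r w)" by (auto simp: algebra_simps)
  have orth_S0: "inner_V V (\<lambda>w. y w - ?p w) z0 = 0" if "z0 \<in> S0" for z0
    using p0 r(2) that unfolding res inner_V_diff_left inner_V_scale_left is_orth_proj_def by simp
  have "inner_V V p0 r = 0" using p0 r(2) by (simp add: inner_V_commute is_orth_proj_def)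
  then have orth_r: "inner_V V (\<lambda>w. y w - ?p w) r = 0"
    unfolding res inner_V_diff_left inner_V_scale_left \<beta> by simp
  have "inner_V V (\<lambda>w. y w - ?p w) z = 0" if z: "z \<in> S" for z
  proof -
    obtain z0 a where "z0 \<in> S0" "z = (\<lambda>w. z0 w + a * r w)" using decomp[OF z] by blast
    then show ?thesis using orth_S0 orth_r by (simp add: inner_V_add_right inner_V_scale_right)
  qed
  with \<open>?p \<in> S\<close> show ?thesis by (simp add: is_orth_proj_def)
qed

lemma is_orth_proj_exists_step:
  assumes "finite V" "w \<in> V" and S: "vec_subspace W S"
    and IH: "\<And>y. \<exists>p. is_orth_proj V {x \<in> S. x w = 0} y p"
  shows "\<exists>p. is_orth_proj V S y p"
proof (cases "\<forall>x\<in>S. x w = 0")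
  case True
  then have "{x \<in> S. x w = 0} = S" by blast
  then show ?thesis using IH by metis
next
  case False
  define S0 where "S0 = {x \<in> S. x w = 0}"
  from False obtain s where s: "s \<in> S" "s w \<noteq> 0" by blast
  obtain q where q: "is_orth_proj V S0 s q" using IH unfolding S0_def by blast
  define r where "r = (\<lambda>v. s v - q v)"
  have "q \<in> S" "q w = 0" using q by (auto simp: is_orth_proj_def S0_def)
  then have r: "r \<in> S" "r w \<noteq> 0" using s S unfolding r_def by (auto simp: vec_subspace_diff)
  have "inner_V V r r > 0" using inner_V_self_pos[of V w r] assms(1,2) r(2) by simp
  then have \<beta>: "inner_V V y r / inner_V V r r * inner_V V r r = inner_V V y r" by simp
  have r_orth: "\<forall>z\<in>S0. inner_V V r z = 0" using q by (simp add: is_orth_proj_def r_def)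
  have decomp: "\<exists>z0\<in>S0. \<exists>a. z = (\<lambda>v. z0 v + a * r v)" if "z \<in> S" for z
  proof (intro bexI exI)
    let ?a = "z w / r w"
    show "z = (\<lambda>v. (z v - ?a * r v) + ?a * r v)" by simp
    have "(\<lambda>v. z v - ?a * r v) \<in> S"
      using vec_subspace_diff[OF S that vec_subspace_scale[OF S r(1)]] .
    then show "(\<lambda>v. z v - ?a * r v) \<in> S0" using r(2) unfolding S0_def by simp
  qed
  obtain p0 where "is_orth_proj V S0 y p0" using IH unfolding S0_def by blast
  from is_orth_proj_extend[OF S this _ r(1) r_orth decomp \<beta>] show ?thesis unfolding S0_def by blast
qed

lemma is_orth_proj_exists:
  assumes "finite V" "vec_subspace V S"
  shows "\<exists>p. is_orth_proj V S y p"
proof -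
  have "\<exists>p. is_orth_proj V S y p" if "finite W" "W \<subseteq> V" "vec_subspace W S" for W S y
    using that
  proof (induction W arbitrary: S y rule: finite_induct)
    case empty
    then have "S = {\<lambda>_. 0}" by (auto simp: vec_subspace_def vecs_def)
    then show ?case by (auto simp: is_orth_proj_def inner_V_def)
  next
    case (insert w W)
    have "vec_subspace W {x \<in> S. x w = 0}"
      using insert.prems(2) unfolding vec_subspace_def vecs_def by auto
    then show ?case
      using is_orth_proj_exists_step[OF \<open>finite V\<close> _ insert.prems(2)] insert.IH insert.prems(1)
        by blast
  qed
  then show ?thesis using assms by blast
qed

section \<open>Eigenprojections of the Laplacian\<close>

lemma lap_mult_add: "lap_mult V E (\<lambda>w. x w + y w) = (\<lambda>w. lap_mult V E x w + lap_mult V E y w)"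
  by (rule ext) (simp add: lap_mult_def sum.distrib distrib_left)

lemma lap_mult_scale: "lap_mult V E (\<lambda>w. a * x w) = (\<lambda>w. a * lap_mult V E x w)"
  by (rule ext) (simp add: lap_mult_def sum_distrib_left mult.left_commute)

lemma vec_subspace_eigenspace_L: "vec_subspace V (eigenspace_L V E c)"
proof -
  have "lap_mult V E (\<lambda>_. 0) = (\<lambda>_. 0)" by (rule ext) (simp add: lap_mult_def)
  then show ?thesis
    by (auto simp: vec_subspace_def eigenspace_L_def vecs_def lap_mult_add lap_mult_scale
        algebra_simps)
qed

lemma eigproj_is_orth_proj:
  assumes "finite V"
  shows "is_orth_proj V (eigenspace_L V E c) y (eigproj V E c y)"
proof -
  obtain p where p: "is_orth_proj V (eigenspace_L V E c) y p"
    using is_orth_proj_exists[OF assms vec_subspace_eigenspace_L] by blast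
  have "is_orth_proj V (eigenspace_L V E c) y (THE p. is_orth_proj V (eigenspace_L V E c) y p)"
    by (rule theI[where P = "is_orth_proj V (eigenspace_L V E c) y", OF p
          is_orth_proj_unique[OF assms vec_subspace_eigenspace_L _ p]])
  then show ?thesis by (simp add: eigproj_def is_orth_proj_def)
qed

lemma eigproj_eqI:
  assumes "finite V" "is_orth_proj V (eigenspace_L V E c) y p"
  shows "eigproj V E c y = p"
  using is_orth_proj_unique[OF assms(1) vec_subspace_eigenspace_L eigproj_is_orth_proj[OF assms(1)]
      assms(2)] .

lemma eigproj_unit_vec_eq_0_iff:
  assumes "finite V" "u \<in> V"
  shows "eigproj V E c (unit_vec u) = (\<lambda>_. 0) \<longleftrightarrow> (\<forall>x\<in>eigenspace_L V E c. x u = 0)"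
proof
  assume "eigproj V E c (unit_vec u) = (\<lambda>_. 0)"
  then show "\<forall>x\<in>eigenspace_L V E c. x u = 0"
    using eigproj_is_orth_proj[OF assms(1), of E c "unit_vec u"]
    by (simp add: is_orth_proj_def inner_V_unit_vec_left[OF assms])
next
  assume vanish: "\<forall>x\<in>eigenspace_L V E c. x u = 0"
  let ?p = "eigproj V E c (unit_vec u)"
  have p: "?p \<in> eigenspace_L V E c" "inner_V V (\<lambda>w. unit_vec u w - ?p w) ?p = 0"
    using eigproj_is_orth_proj[OF assms(1), of E c "unit_vec u"] by (auto simp: is_orth_proj_def)
  then have "inner_V V ?p ?p = ?p u"
    by (simp add: inner_V_diff_left inner_V_unit_vec_left[OF assms])
  also have "\<dots> = 0" using vanish p(1) by blast
  finally show "?p = (\<lambda>_. 0)"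
    using inner_V_self_eq_0[OF assms(1)] p(1) by (simp add: eigenspace_L_def)
qed

lemma not_in_eig_support_iff:
  assumes "finite V"
  shows "c \<notin> eig_support V E u \<longleftrightarrow> eigproj V E c (unit_vec u) = (\<lambda>_. 0)"
  using eigproj_is_orth_proj[OF assms, of E c "unit_vec u"]
  unfolding eig_support_def is_L_eigenvalue_def is_orth_proj_def by auto

section \<open>Regular graphs and their blow-ups\<close>

lemma lap_mult_regular:
  assumes "simple_graph V E" "regular V E d" "v \<in> V"
  shows "lap_mult V E x v = real d * x v - (\<Sum>w\<in>{w\<in>V. E v w}. x w)"
proof -
  have "finite V" using assms(1) by (simp add: simple_graph_def)
  have "degree V E v = d" using assms(2,3) by (simp add: regular_def)
  then have "lap_mult V E x v
      = (\<Sum>w\<in>V. (if v = w then real d * x w else 0) - (if E v w then x w else 0))"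
    using assms(3) unfolding lap_mult_def laplacian_def
      by (simp, intro sum.cong) (auto simp: algebra_simps)
  also have "\<dots> = (\<Sum>w\<in>V. (if v = w then real d * x w else 0)) - (\<Sum>w\<in>V. (if E v w then x w else 0))"
    by (rule sum_subtractf)
  also have "\<dots> = real d * x v - (\<Sum>w\<in>{w\<in>V. E v w}. x w)"
    using \<open>finite V\<close> assms(3) by (simp add: sum.inter_filter)
  finally show ?thesis .
qed

lemma eigenspace_L_degree:
  assumes "simple_graph V E" "regular V E d"
  shows "eigenspace_L V E (real d) = {x \<in> vecs V. \<forall>v\<in>V. (\<Sum>w\<in>{w\<in>V. E v w}. x w) = 0}"
proof -
  have "lap_mult V E x = (\<lambda>v. real d * x v) \<longleftrightarrow> (\<forall>v\<in>V. (\<Sum>w\<in>{w\<in>V. E v w}. x w) = 0)"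
    if "x \<in> vecs V" for x
    using that lap_mult_regular[OF assms, of _ x]
    by (auto simp: fun_eq_iff lap_mult_def vecs_def)
  then show ?thesis unfolding eigenspace_L_def by blast
qed

lemma simple_graph_blowup2: "simple_graph V E \<Longrightarrow> simple_graph (blowup2_V V) (blowup2_E E)"
  unfolding simple_graph_def blowup2_V_def blowup2_E_def by auto

lemma blowup2_neighbours:
  "simple_graph V E \<Longrightarrow> l \<in> {0, 1} \<Longrightarrow>
    {p \<in> blowup2_V V. blowup2_E E (l, v) p} = {0, 1} \<times> {w \<in> V. E v w}"
  unfolding simple_graph_def blowup2_V_def blowup2_E_def by auto

lemma regular_blowup2:
  assumes "simple_graph V E" "regular V E d"
  shows "regular (blowup2_V V) (blowup2_E E) (2 * d)"
  unfolding regular_def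
proof
  fix p assume "p \<in> blowup2_V V"
  then obtain l v where lv: "p = (l, v)" "l \<in> {0, 1}" "v \<in> V" unfolding blowup2_V_def by auto
  have "finite V" using assms(1) by (simp add: simple_graph_def)
  then have "degree (blowup2_V V) (blowup2_E E) p = 2 * card {w \<in> V. E v w}"
    unfolding degree_def lv(1) blowup2_neighbours[OF assms(1) lv(2)]
      by (simp add: card_cartesian_product)
  also have "\<dots> = 2 * d" using assms(2) lv(3) by (simp add: regular_def degree_def)
  finally show "degree (blowup2_V V) (blowup2_E E) p = 2 * d" .
qed

lemma lap_mult_blowup2:
  assumes "simple_graph V E" "regular V E d" "l \<in> {0, 1}" "v \<in> V"
  shows "lap_mult (blowup2_V V) (blowup2_E E) x (l, v)
     = 2 * real d * x (l, v) - (\<Sum>w\<in>{w\<in>V. E v w}. x (0, w) + x (1, w))"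
proof -
  have "(l, v) \<in> blowup2_V V" using assms(3,4) by (simp add: blowup2_V_def)
  then have "lap_mult (blowup2_V V) (blowup2_E E) x (l, v)
      = real (2 * d) * x (l, v) - (\<Sum>p\<in>{0::nat, 1} \<times> {w\<in>V. E v w}. x p)"
    using lap_mult_regular[OF simple_graph_blowup2[OF assms(1)] regular_blowup2[OF assms(1,2)]]
    by (simp add: blowup2_neighbours[OF assms(1,3)])
  also have "(\<Sum>p\<in>{0::nat, 1} \<times> {w\<in>V. E v w}. x p) = (\<Sum>m\<in>{0::nat, 1}. \<Sum>w\<in>{w\<in>V. E v w}. x (m, w))"
    by (rule sum.cartesian_product')
  also have "\<dots> = (\<Sum>w\<in>{w\<in>V. E v w}. x (0, w) + x (1, w))" by (simp add: sum.distrib)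
  finally show ?thesis by simp
qed

lemma inner_V_blowup2:
  "inner_V (blowup2_V V) f g = (\<Sum>v\<in>V. f (0, v) * g (0, v) + f (1, v) * g (1, v))"
proof -
  have "inner_V (blowup2_V V) f g = (\<Sum>m\<in>{0::nat, 1}. \<Sum>v\<in>V. f (m, v) * g (m, v))"
    unfolding inner_V_def blowup2_V_def by (rule sum.cartesian_product')
  then show ?thesis by (simp add: sum.distrib)
qed

lemma blowup2_eigenspace_eq:
  assumes "simple_graph V E" "regular V E d" "z \<in> eigenspace_L (blowup2_V V) (blowup2_E E) c"
    and "l \<in> {0, 1}" "v \<in> V"
  shows "c * z (l, v) = 2 * real d * z (l, v) - (\<Sum>w\<in>{w\<in>V. E v w}. z (0, w) + z (1, w))"
  using assms(3) lap_mult_blowup2[OF assms(1,2,4,5), of z]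
  by (auto simp: eigenspace_L_def dest: fun_cong[where x = "(l, v)"])

lemma blowup2_eigenspace_layer_sum:
  assumes "simple_graph V E" "regular V E d" "z \<in> eigenspace_L (blowup2_V V) (blowup2_E E) c"
  shows "(\<lambda>v. z (0, v) + z (1, v)) \<in> eigenspace_L V E (c / 2)"
proof -
  have "z \<in> vecs (blowup2_V V)" using assms(3) by (simp add: eigenspace_L_def)
  then have "(\<lambda>v. z (0, v) + z (1, v)) \<in> vecs V" by (simp add: vecs_def blowup2_V_def)
  moreover have "lap_mult V E (\<lambda>v. z (0, v) + z (1, v)) v = c / 2 * (z (0, v) + z (1, v))" for v
  proof (cases "v \<in> V")
    case True
    then show ?thesis
      using lap_mult_regular[OF assms(1,2) True, of "\<lambda>v. z (0, v) + z (1, v)"]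
        blowup2_eigenspace_eq[OF assms _ True, of 0] blowup2_eigenspace_eq[OF assms _ True, of 1]
      by (simp add: sum.distrib algebra_simps)
  next
    case False
    then show ?thesis using \<open>_ \<in> vecs V\<close> by (simp add: lap_mult_def vecs_def)
  qed
  ultimately show ?thesis by (simp add: eigenspace_L_def fun_eq_iff)
qed

lemma blowup2_eigenspace_layers_eq:
  assumes "simple_graph V E" "regular V E d" "z \<in> eigenspace_L (blowup2_V V) (blowup2_E E) c"
    and "c \<noteq> 2 * real d" "v \<in> V"
  shows "z (0, v) = z (1, v)"
proof -
  have "(2 * real d - c) * (z (0, v) - z (1, v)) = 0"
    using blowup2_eigenspace_eq[OF assms(1-3) _ assms(5), of 0]
      blowup2_eigenspace_eq[OF assms(1-3) _ assms(5), of 1] by (simp add: algebra_simps)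
  then show ?thesis using assms(4) by simp
qed

text \<open>e_(k,u) = (e_u, e_u)/2 \<plusminus> (e_u, -e_u)/2: the symmetric half projects to half the
  (c/2)-projection of e_u on each layer, the antisymmetric half lies in the 2d-eigenspace.\<close>
definition blowup2_proj :: "'a set \<Rightarrow> ('a \<Rightarrow> 'a \<Rightarrow> bool) \<Rightarrow> nat \<Rightarrow> 'a \<Rightarrow> nat \<Rightarrow> real \<Rightarrow> nat \<times> 'a \<Rightarrow> real"
  where "blowup2_proj V E d u k c = (\<lambda>(l, v). if l \<in> {0, 1} \<and> v \<in> V then
      (eigproj V E (c / 2) (unit_vec u) v
        + (if c = 2 * real d then (if l = k then 1 else -1) * unit_vec u v else 0)) / 2
    else 0)"

lemma blowup2_proj_in_eigenspace:
  assumes G: "simple_graph V E" "regular V E d" and "k \<in> {0, 1}"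
  shows "blowup2_proj V E d u k c \<in> eigenspace_L (blowup2_V V) (blowup2_E E) c"
proof -
  have "finite V" using G(1) by (simp add: simple_graph_def)
  let ?P = "eigproj V E (c / 2) (unit_vec u)" and ?Q = "blowup2_proj V E d u k c"
  have "?P \<in> eigenspace_L V E (c / 2)"
    using eigproj_is_orth_proj[OF \<open>finite V\<close>] by (simp add: is_orth_proj_def)
  then have P_eig: "lap_mult V E ?P v = c / 2 * ?P v" for v by (simp add: eigenspace_L_def)
  have P_nbrs: "(\<Sum>w\<in>{w\<in>V. E v w}. ?P w) = real d * ?P v - c / 2 * ?P v" if "v \<in> V" for v
    using lap_mult_regular[OF G that, of ?P] P_eig[of v] by linarith
  have Q_layers: "?Q (0, w) + ?Q (1, w) = ?P w" if "w \<in> V" for w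
    using that \<open>k \<in> {0, 1}\<close> by (auto simp: blowup2_proj_def field_simps)
  have "lap_mult (blowup2_V V) (blowup2_E E) ?Q p = c * ?Q p" for p
  proof (cases "p \<in> blowup2_V V")
    case True
    then obtain l v where lv: "p = (l, v)" "l \<in> {0, 1}" "v \<in> V" unfolding blowup2_V_def by auto
    have "lap_mult (blowup2_V V) (blowup2_E E) ?Q p
        = 2 * real d * ?Q (l, v) - (\<Sum>w\<in>{w\<in>V. E v w}. ?P w)"
      unfolding lv(1) lap_mult_blowup2[OF G lv(2,3)] using Q_layers
      by (intro arg_cong2[where f = "(-)"] refl sum.cong) auto
    also have "\<dots> = c * ?Q p"
      unfolding P_nbrs[OF lv(3)] using lv by (auto simp: blowup2_proj_def algebra_simps)
    finally show ?thesis .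
  next
    case False
    then show ?thesis by (cases p) (auto simp: lap_mult_def blowup2_proj_def blowup2_V_def)
  qed
  moreover have "?Q \<in> vecs (blowup2_V V)" by (auto simp: vecs_def blowup2_proj_def blowup2_V_def)
  ultimately show ?thesis by (simp add: eigenspace_L_def fun_eq_iff)
qed

lemma blowup2_proj_orthogonal:
  assumes G: "simple_graph V E" "regular V E d" and "k \<in> {0, 1}"
    and z: "z \<in> eigenspace_L (blowup2_V V) (blowup2_E E) c"
  shows "inner_V (blowup2_V V) (\<lambda>p. unit_vec (k, u) p - blowup2_proj V E d u k c p) z = 0"
proof -
  have "finite V" using G(1) by (simp add: simple_graph_def)
  let ?P = "eigproj V E (c / 2) (unit_vec u)" and ?Q = "blowup2_proj V E d u k c"
  let ?s = "\<lambda>v. z (0, v) + z (1, v)"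
  have "inner_V (blowup2_V V) (\<lambda>p. unit_vec (k, u) p - ?Q p) z
      = (\<Sum>v\<in>V. (unit_vec u v - ?P v) / 2 * ?s v)"
    unfolding inner_V_blowup2
  proof (rule sum.cong[OF refl])
    fix v assume "v \<in> V"
    show "(unit_vec (k, u) (0, v) - ?Q (0, v)) * z (0, v)
        + (unit_vec (k, u) (1, v) - ?Q (1, v)) * z (1, v)
        = (unit_vec u v - ?P v) / 2 * ?s v"
    proof (cases "c = 2 * real d")
      case True
      then show ?thesis
        using \<open>v \<in> V\<close> \<open>k \<in> {0, 1}\<close> by (auto simp: blowup2_proj_def unit_vec_def field_simps)
    next
      case False
      then show ?thesis
        using \<open>v \<in> V\<close> \<open>k \<in> {0, 1}\<close> blowup2_eigenspace_layers_eq[OF G z False \<open>v \<in> V\<close>]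
        by (auto simp: blowup2_proj_def unit_vec_def field_simps)
    qed
  qed
  also have "\<dots> = inner_V V (\<lambda>v. unit_vec u v - ?P v) ?s / 2"
    by (simp add: inner_V_def sum_divide_distrib)
  also have "\<dots> = 0"
    using eigproj_is_orth_proj[OF \<open>finite V\<close>] blowup2_eigenspace_layer_sum[OF G z]
    by (simp add: is_orth_proj_def)
  finally show ?thesis .
qed

lemma eigproj_blowup2:
  assumes "simple_graph V E" "regular V E d" "k \<in> {0, 1}"
  shows "eigproj (blowup2_V V) (blowup2_E E) c (unit_vec (k, u)) = blowup2_proj V E d u k c"
proof (rule eigproj_eqI)
  show "finite (blowup2_V V)" using assms(1) by (simp add: simple_graph_def blowup2_V_def)
  show "is_orth_proj (blowup2_V V) (eigenspace_L (blowup2_V V) (blowup2_E E) c) (unit_vec (k, u))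
      (blowup2_proj V E d u k c)"
    using blowup2_proj_in_eigenspace[OF assms] blowup2_proj_orthogonal[OF assms]
    by (simp add: is_orth_proj_def)
qed

lemma blowup2_proj_layers_eq:
  "c \<noteq> 2 * real d \<Longrightarrow> blowup2_proj V E d u 0 c = blowup2_proj V E d u 1 c"
  by (simp add: blowup2_proj_def fun_eq_iff)

lemma blowup2_proj_antisymmetric_iff:
  assumes "finite V"
  shows "blowup2_proj V E d u 0 (2 * real d) = (\<lambda>p. - blowup2_proj V E d u 1 (2 * real d) p)
    \<longleftrightarrow> eigproj V E (real d) (unit_vec u) = (\<lambda>_. 0)"
    (is "?antisym \<longleftrightarrow> ?P = _")
proof
  assume ?antisym
  have "?P v = 0" for v
  proof (cases "v \<in> V")
    case True
    then have "blowup2_proj V E d u 0 (2 * real d) (0, v)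
        = - blowup2_proj V E d u 1 (2 * real d) (0, v)"
      using \<open>?antisym\<close> by (simp add: fun_eq_iff)
    with True show ?thesis by (simp add: blowup2_proj_def field_simps)
  next
    case False
    then show ?thesis
      using eigproj_is_orth_proj[OF assms] by (simp add: is_orth_proj_def eigenspace_L_def vecs_def)
  qed
  then show "?P = (\<lambda>_. 0)" by blast
qed (simp add: blowup2_proj_def fun_eq_iff)

lemma double_degree_in_eig_support_blowup2:
  assumes G: "simple_graph V E" "regular V E d" and "u \<in> V"
  shows "2 * real d \<in> eig_support (blowup2_V V) (blowup2_E E) (0, u)"
proof -
  let ?Q = "blowup2_proj V E d u 0 (2 * real d)"
  have "?Q (0, u) - ?Q (1, u) = 1" using \<open>u \<in> V\<close>
    by (simp add: blowup2_proj_def unit_vec_def field_simps)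
  then have "?Q \<noteq> (\<lambda>_. 0)" by auto
  then show ?thesis
    using blowup2_proj_in_eigenspace[OF G, of 0] eigproj_blowup2[OF G, of 0]
    by (auto simp: eig_support_def is_L_eigenvalue_def)
qed

lemma strongly_cospectral_blowup2_iff:
  assumes G: "simple_graph V E" "regular V E d" and "u \<in> V"
  shows "strongly_cospectral (blowup2_V V) (blowup2_E E) (0, u) (1, u)
    \<longleftrightarrow> eigproj V E (real d) (unit_vec u) = (\<lambda>_. 0)"
proof -
  have "finite V" using G(1) by (simp add: simple_graph_def)
  let ?Q = "blowup2_proj V E d u" and ?c = "2 * real d"
  have proj: "eigproj (blowup2_V V) (blowup2_E E) c (unit_vec (0, u)) = ?Q 0 c"
    "eigproj (blowup2_V V) (blowup2_E E) c (unit_vec (1, u)) = ?Q 1 c" for c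
    using eigproj_blowup2[OF G] by auto
  show ?thesis
  proof
    assume "strongly_cospectral (blowup2_V V) (blowup2_E E) (0, u) (1, u)"
    then have "?Q 0 ?c = ?Q 1 ?c \<or> ?Q 0 ?c = (\<lambda>p. - ?Q 1 ?c p)"
      using double_degree_in_eig_support_blowup2[OF assms] unfolding strongly_cospectral_def proj
        by blast
    moreover have "?Q 0 ?c (0, u) \<noteq> ?Q 1 ?c (0, u)"
      using \<open>u \<in> V\<close> by (simp add: blowup2_proj_def unit_vec_def)
    ultimately show "eigproj V E (real d) (unit_vec u) = (\<lambda>_. 0)"
      using blowup2_proj_antisymmetric_iff[OF \<open>finite V\<close>] by metis
  next
    assume "eigproj V E (real d) (unit_vec u) = (\<lambda>_. 0)"
    then have "?Q 0 ?c = (\<lambda>p. - ?Q 1 ?c p)"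
      using blowup2_proj_antisymmetric_iff[OF \<open>finite V\<close>] by blast
    then show "strongly_cospectral (blowup2_V V) (blowup2_E E) (0, u) (1, u)"
      unfolding strongly_cospectral_def proj
      using blowup2_proj_layers_eq[of _ d V E u] by metis
  qed
qed

lemma strongly_cospectral_blowup2_iff_kernel:
  assumes G: "simple_graph V E" "regular V E d" and "u \<in> V"
  shows "strongly_cospectral (blowup2_V V) (blowup2_E E) (0, u) (1, u)
    \<longleftrightarrow> (\<forall>x\<in>vecs V. (\<forall>v\<in>V. (\<Sum>w\<in>{w\<in>V. E v w}. x w) = 0) \<longrightarrow> x u = 0)"
proof -
  have "finite V" using G(1) by (simp add: simple_graph_def)
  then show ?thesis
    unfolding strongly_cospectral_blowup2_iff[OF assms]
      eigproj_unit_vec_eq_0_iff[OF \<open>finite V\<close> \<open>u \<in> V\<close>] eigenspace_L_degree[OF G] by blast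
qed

lemma strongly_cospectral_blowup2_iff_eig_support:
  assumes "simple_graph V E" "regular V E d" "u \<in> V"
  shows "strongly_cospectral (blowup2_V V) (blowup2_E E) (0, u) (1, u) \<longleftrightarrow> real d \<notin> eig_support V E u"
  using strongly_cospectral_blowup2_iff[OF assms] not_in_eig_support_iff[of V "real d" E u] assms(1)
  by (simp add: simple_graph_def)

section \<open>Complete graphs\<close>

lemma simple_graph_complete: "simple_graph (complete_V n) (complete_E n)"
  unfolding simple_graph_def complete_V_def complete_E_def by auto

lemma complete_neighbours: "v < n \<Longrightarrow> {w \<in> complete_V n. complete_E n v w} = {0..<n} - {v}"
  unfolding complete_V_def complete_E_def by auto

lemma regular_complete: "regular (complete_V n) (complete_E n) (n - 1)"
  unfolding regular_def degree_def
proof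
  fix v assume "v \<in> complete_V n"
  then have "v < n" by (simp add: complete_V_def)
  then show "card {w \<in> complete_V n. complete_E n v w} = n - 1" by (simp add: complete_neighbours)
qed

lemma complete_kernel_trivial:
  fixes x :: "nat \<Rightarrow> real"
  assumes "2 \<le> n" "u < n" and kernel: "\<forall>v<n. (\<Sum>w\<in>{0..<n} - {v}. x w) = 0"
  shows "x u = 0"
proof -
  define T where "T = (\<Sum>w\<in>{0..<n}. x w)"
  have x_T: "x v = T" if "v < n" for v
    using sum.remove[of "{0..<n}" v x] kernel that unfolding T_def by simp
  have "0 = (\<Sum>w\<in>{0..<n} - {u}. x w)" using kernel assms(2) by simp
  also have "\<dots> = real (n - 1) * T" using x_T by (simp add: assms(2))
  finally have "T = 0" using assms(1) by simp
  then show ?thesis using x_T assms(2) by simp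
qed

lemma strongly_cospectral_blowup2_complete:
  assumes "2 \<le> n" "u \<in> complete_V n"
  shows "strongly_cospectral (blowup2_V (complete_V n)) (blowup2_E (complete_E n)) (0, u) (1, u)"
proof -
  have "x u = 0"
    if "\<forall>v\<in>complete_V n. (\<Sum>w\<in>{w \<in> complete_V n. complete_E n v w}. x w) = 0"
    for x :: "nat \<Rightarrow> real"
  proof (rule complete_kernel_trivial[OF assms(1)])
    show "u < n" using assms(2) by (simp add: complete_V_def)
    show "\<forall>v<n. (\<Sum>w\<in>{0..<n} - {v}. x w) = 0"
      using that complete_neighbours by (simp add: complete_V_def)
  qed
  then show ?thesis
    using strongly_cospectral_blowup2_iff_kernel[OF simple_graph_complete regular_complete assms(2)]
    by blast
qed

section \<open>Cycles\<close>

lemma add_one_mod_eq: "(v::nat) < n \<Longrightarrow> (v + 1) mod n = (if v + 1 = n then 0 else v + 1)"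
  by auto

lemma add_pred_mod_eq: "(v::nat) < n \<Longrightarrow> (v + n - 1) mod n = (if v = 0 then n - 1 else v - 1)"
proof (cases "v = 0")
  case False
  assume "v < n"
  have "v + n - 1 = (v - 1) + n" using False by linarith
  then have "(v + n - 1) mod n = (v - 1 + n) mod n" by simp
  also have "\<dots> = v - 1" using \<open>v < n\<close> by simp
  finally show ?thesis using False by simp
qed simp

lemma simple_graph_cycle: "simple_graph (cycle_V n) (cycle_E n)"
  unfolding simple_graph_def cycle_V_def cycle_E_def by auto

lemma cycle_E_iff:
  assumes "3 \<le> n" "v < n" "w < n"
  shows "cycle_E n v w \<longleftrightarrow> w = (v + 1) mod n \<or> w = (v + n - 1) mod n"
  unfolding cycle_E_def
    using assms add_one_mod_eq[of v n] add_one_mod_eq[of w n] add_pred_mod_eq[of v n]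
  by (auto split: if_splits)

lemma cycle_neighbours:
  assumes "3 \<le> n" "v < n"
  shows "{w \<in> cycle_V n. cycle_E n v w} = {(v + 1) mod n, (v + n - 1) mod n}"
  using cycle_E_iff[OF assms] assms unfolding cycle_V_def by auto

lemma cycle_neighbours_distinct: "3 \<le> n \<Longrightarrow> (v::nat) < n \<Longrightarrow> (v + 1) mod n \<noteq> (v + n - 1) mod n"
  using add_one_mod_eq[of v n] add_pred_mod_eq[of v n] by (auto split: if_splits)

lemma regular_cycle: "3 \<le> n \<Longrightarrow> regular (cycle_V n) (cycle_E n) 2"
  unfolding regular_def degree_def
  using cycle_neighbours cycle_neighbours_distinct by (auto simp: cycle_V_def)

lemma cycle_kernel_iff:
  assumes "3 \<le> n"
  shows "(\<forall>v\<in>cycle_V n. (\<Sum>w\<in>{w \<in> cycle_V n. cycle_E n v w}. x w) = 0)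
    \<longleftrightarrow> (\<forall>v<n. x ((v + 1) mod n) + x ((v + n - 1) mod n) = (0::real))"
  using cycle_neighbours[OF assms] cycle_neighbours_distinct[OF assms] by (auto simp: cycle_V_def)

lemma cycle_kernel_trivial:
  fixes x :: "nat \<Rightarrow> real"
  assumes n: "3 \<le> n" "n mod 4 \<noteq> 0" and v: "v < n"
    and kernel: "\<forall>v<n. x ((v + 1) mod n) + x ((v + n - 1) mod n) = 0"
  shows "x v = 0"
proof -
  have step: "x ((a + 2) mod n) = - x a" if "a < n" for a
  proof -
    have "(a + 1) mod n < n" "((a + 1) mod n + 1) mod n = (a + 2) mod n" using n
      by (auto simp: mod_Suc_eq)
    moreover have "((a + 1) mod n + n - 1) mod n = a"
      using that n add_one_mod_eq[of a n] add_pred_mod_eq[of 0 n] by (auto split: if_splits)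
    ultimately show ?thesis using kernel by force
  qed
  have iter: "x ((v + 2 * k) mod n) = (-1) ^ k * x v" for k
  proof (induction k)
    case (Suc k)
    have "((v + 2 * k) mod n + 2) mod n = (v + 2 * k + 2) mod n" by (rule mod_add_left_eq)
    then have "(v + 2 * Suc k) mod n = ((v + 2 * k) mod n + 2) mod n" by simp
    then show ?case using step[of "(v + 2 * k) mod n"] Suc n by simp
  qed (use v in simp)
  show ?thesis
  proof (cases "even n")
    case False
    have "x v = (-1) ^ n * x v" using iter[of n] v by simp
    then show ?thesis using False by simp
  next
    case True
    then have "odd (n div 2)" using n(2) by presburger
    moreover have "(v + 2 * (n div 2)) mod n = v" using v True by simp
    ultimately have "x v = - x v" using iter[of "n div 2"] by simp
    then show ?thesis by simp
  qed
qed

lemma cos_pi_half_times_int_mod4: "cos (pi / 2 * of_int (k mod 4)) = cos (pi / 2 * of_int k)"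
proof -
  have "real_of_int k = real_of_int (k mod 4) + 4 * real_of_int (k div 4)"
    using mod_mult_div_eq[of k 4] by (metis of_int_add of_int_mult of_int_numeral)
  then have "pi / 2 * of_int k = pi / 2 * of_int (k mod 4) + 2 * pi * of_int (k div 4)"
    by (simp add: algebra_simps)
  then show ?thesis
    by (simp only: cos_add cos_int_2pin sin_int_2pin mult_1_right mult_zero_right diff_zero)
qed

lemma mod_diff_mod_of_dvd: "(c::int) dvd m \<Longrightarrow> (a mod m - b) mod c = (a - b) mod c"
proof -
  assume "c dvd m"
  have "(a mod m - b) mod c = (a mod m mod c - b) mod c" by (rule mod_diff_left_eq[symmetric])
  also have "\<dots> = (a mod c - b) mod c" using \<open>c dvd m\<close> by (simp add: mod_mod_cancel)
  also have "\<dots> = (a - b) mod c" by (rule mod_diff_left_eq)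
  finally show ?thesis .
qed

lemma cycle_kernel_cos:
  fixes n u v :: nat
  assumes "4 dvd n" "v < n"
  defines "h \<equiv> \<lambda>w::nat. cos (pi / 2 * of_int (int w - int u))"
  shows "h ((v + 1) mod n) + h ((v + n - 1) mod n) = 0"
proof -
  have "(4::int) dvd int n" using assms(1) by presburger
  have "int ((v + 1) mod n) = (int v + 1) mod int n" by (simp add: zmod_int add.commute)
  then have succ: "(int ((v + 1) mod n) - int u) mod 4 = (int v - int u + 1) mod 4"
    using mod_diff_mod_of_dvd[OF \<open>4 dvd int n\<close>, of "int v + 1" "int u"] by (simp add: algebra_simps)
  have "int ((v + n - 1) mod n) = (int v - 1 + int n) mod int n"
    using assms(2) by (simp add: zmod_int of_nat_diff algebra_simps)
  also have "\<dots> = (int v - 1) mod int n" by simp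
  finally have pred: "(int ((v + n - 1) mod n) - int u) mod 4 = (int v - int u - 1) mod 4"
    using mod_diff_mod_of_dvd[OF \<open>4 dvd int n\<close>, of "int v - 1" "int u"] by (simp add: algebra_simps)
  let ?x = "pi / 2 * of_int (int v - int u)"
  have "h ((v + 1) mod n) = cos (pi / 2 * of_int ((int v - int u + 1) mod 4))"
    unfolding h_def succ[symmetric] by (rule cos_pi_half_times_int_mod4[symmetric])
  also have "\<dots> = cos (?x + pi / 2)"
    unfolding cos_pi_half_times_int_mod4 by (intro arg_cong[where f = cos]) (simp add: field_simps)
  moreover have "h ((v + n - 1) mod n) = cos (pi / 2 * of_int ((int v - int u - 1) mod 4))"
    unfolding h_def pred[symmetric] by (rule cos_pi_half_times_int_mod4[symmetric])
  moreover have "\<dots> = cos (?x - pi / 2)"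
    unfolding cos_pi_half_times_int_mod4 by (intro arg_cong[where f = cos]) (simp add: field_simps)
  ultimately have "h ((v + 1) mod n) + h ((v + n - 1) mod n)
      = cos (?x + pi / 2) + cos (?x - pi / 2)"
    by simp
  also have "\<dots> = 0" by (simp add: cos_add cos_diff)
  finally show ?thesis .
qed

lemma strongly_cospectral_blowup2_cycle_iff:
  assumes "3 \<le> n" "u \<in> cycle_V n"
  shows "strongly_cospectral (blowup2_V (cycle_V n)) (blowup2_E (cycle_E n)) (0, u) (1, u)
    \<longleftrightarrow> n mod 4 \<noteq> 0"
proof -
  have "u < n" using assms(2) by (simp add: cycle_V_def)
  have sc_iff: "strongly_cospectral (blowup2_V (cycle_V n)) (blowup2_E (cycle_E n)) (0, u) (1, u)
    \<longleftrightarrow> (\<forall>x\<in>vecs (cycle_V n). (\<forall>v<n. x ((v + 1) mod n) + x ((v + n - 1) mod n) = 0) \<longrightarrow> x u = 0)"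
    using strongly_cospectral_blowup2_iff_kernel[OF simple_graph_cycle regular_cycle[OF assms(1)]
        assms(2)]
      cycle_kernel_iff[OF assms(1)] by simp
  show ?thesis
  proof (cases "n mod 4 = 0")
    case False
    then show ?thesis unfolding sc_iff using cycle_kernel_trivial[OF assms(1) False \<open>u < n\<close>]
      by blast
  next
    case True
    then have "4 dvd n" by presburger
    define g where "g v = (if v < n then cos (pi / 2 * of_int (int v - int u)) else 0)" for v
    have "g \<in> vecs (cycle_V n)" by (simp add: g_def vecs_def cycle_V_def)
    moreover have "g ((v + 1) mod n) + g ((v + n - 1) mod n) = 0" if "v < n" for v
      using cycle_kernel_cos[OF \<open>4 dvd n\<close> that, of u] that by (simp add: g_def)
    moreover have "g u \<noteq> 0" using \<open>u < n\<close> by (simp add: g_def)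
    ultimately show ?thesis unfolding sc_iff using True by blast
  qed
qed

section \<open>Hypercubes\<close>

definition flip :: "nat \<Rightarrow> nat set \<Rightarrow> nat set" where
  "flip i A = (if i \<in> A then A - {i} else insert i A)"

lemma flip_flip [simp]: "flip i (flip i A) = A"
  unfolding flip_def by auto

lemma flip_commute: "flip i (flip j A) = flip j (flip i A)"
  unfolding flip_def by auto

lemma sym_diff_flip: "(A - flip i A) \<union> (flip i A - A) = {i}"
  unfolding flip_def by auto

lemma flip_subset: "A \<subseteq> {0..<d} \<Longrightarrow> i < d \<Longrightarrow> flip i A \<subseteq> {0..<d}"
  unfolding flip_def by auto

lemma inj_on_flip: "inj_on (\<lambda>i. flip i A) I"
proof
  fix i j assume "flip i A = flip j A"
  have "{i} = (A - flip i A) \<union> (flip i A - A)" by (rule sym_diff_flip[symmetric])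
  also have "\<dots> = {j}" unfolding \<open>flip i A = flip j A\<close> by (rule sym_diff_flip)
  finally show "i = j" by simp
qed

lemma sym_diff_eq_singleton_imp_flip:
  assumes "(A - B) \<union> (B - A) = {i}"
  shows "B = flip i A"
proof (rule set_eqI)
  fix y
  have "(y \<in> A \<and> y \<notin> B \<or> y \<in> B \<and> y \<notin> A) \<longleftrightarrow> y = i"
    using assms[unfolded set_eq_iff, rule_format, of y] by simp
  then show "y \<in> B \<longleftrightarrow> y \<in> flip i A" unfolding flip_def by (cases "i \<in> A") auto
qed

lemma simple_graph_cube: "simple_graph (cube_V d) (cube_E d)"
  unfolding simple_graph_def cube_E_def cube_V_def by (auto simp: Un_commute)

lemma cube_E_iff:
  assumes "A \<in> cube_V d"
  shows "cube_E d A B \<longleftrightarrow> (\<exists>i<d. B = flip i A)"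
proof
  assume "cube_E d A B"
  then have B: "B \<subseteq> {0..<d}" and "card ((A - B) \<union> (B - A)) = 1"
    by (auto simp: cube_E_def cube_V_def)
  then obtain i where i: "(A - B) \<union> (B - A) = {i}" using card_1_singletonE by blast
  moreover have "i \<in> A \<union> B" using i by blast
  ultimately have "i < d" using B assms by (auto simp: cube_V_def)
  with sym_diff_eq_singleton_imp_flip[OF i] show "\<exists>i<d. B = flip i A" by blast
next
  assume "\<exists>i<d. B = flip i A"
  then obtain i where "i < d" "B = flip i A" by blast
  moreover have "A \<subseteq> {0..<d}" using assms by (simp add: cube_V_def)
  ultimately have "B \<subseteq> {0..<d}" using flip_subset[of A d i] by simp
  moreover have "card ((A - B) \<union> (B - A)) = 1" using sym_diff_flip[of A i] \<open>B = flip i A\<close> by simp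
  ultimately show "cube_E d A B" using assms by (simp add: cube_E_def cube_V_def)
qed

lemma cube_neighbours:
  assumes "A \<in> cube_V d"
  shows "{B \<in> cube_V d. cube_E d A B} = (\<lambda>i. flip i A) ` {0..<d}"
proof (intro set_eqI iffI)
  fix B assume "B \<in> {B \<in> cube_V d. cube_E d A B}"
  then show "B \<in> (\<lambda>i. flip i A) ` {0..<d}" using cube_E_iff[OF assms] by auto
next
  fix B assume "B \<in> (\<lambda>i. flip i A) ` {0..<d}"
  then obtain i where i: "i < d" "B = flip i A" by auto
  then have "B \<in> cube_V d" using flip_subset[of A d i] assms by (simp add: cube_V_def)
  then show "B \<in> {B \<in> cube_V d. cube_E d A B}" using cube_E_iff[OF assms] i by auto
qed

lemma regular_cube: "regular (cube_V d) (cube_E d) d"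
  unfolding regular_def degree_def using cube_neighbours card_image[OF inj_on_flip] by simp

definition cube_adj_eigen :: "nat \<Rightarrow> int \<Rightarrow> (nat set \<Rightarrow> real) \<Rightarrow> bool" where
  "cube_adj_eigen d k x \<longleftrightarrow> (\<forall>A \<subseteq> {0..<d}. (\<Sum>i<d. x (flip i A)) = of_int k * x A)"

lemma cube_kernel_iff:
  "(\<forall>A\<in>cube_V d. (\<Sum>B\<in>{B \<in> cube_V d. cube_E d A B}. x B) = 0) \<longleftrightarrow> cube_adj_eigen d 0 x"
  using cube_neighbours
  by (simp add: sum.reindex[OF inj_on_flip] atLeast0LessThan cube_adj_eigen_def cube_V_def Ball_def)

lemma cube_adj_eigen_fold:
  assumes x: "cube_adj_eigen (Suc d) k x" and \<sigma>: "\<sigma> \<in> {-1, 1}"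
  shows "cube_adj_eigen d (k - \<sigma>) (\<lambda>B. x B + of_int \<sigma> * x (flip d B))"
  unfolding cube_adj_eigen_def
proof (intro allI impI)
  fix A assume "A \<subseteq> {0..<d}"
  then have "A \<subseteq> {0..<Suc d}" by auto
  moreover from this have "flip d A \<subseteq> {0..<Suc d}" using flip_subset by blast
  ultimately have "(\<Sum>i<d. x (flip i A)) = of_int k * x A - x (flip d A)"
    "(\<Sum>i<d. x (flip d (flip i A))) = of_int k * x (flip d A) - x A"
    using x by (auto simp: cube_adj_eigen_def flip_commute)
  then have "(\<Sum>i<d. x (flip i A) + of_int \<sigma> * x (flip d (flip i A)))
      = (of_int k * x A - x (flip d A)) + of_int \<sigma> * (of_int k * x (flip d A) - x A)"
    by (simp add: sum.distrib sum_distrib_left[symmetric])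
  also have "\<dots> = of_int (k - \<sigma>) * (x A + of_int \<sigma> * x (flip d A))"
    using \<sigma> by (auto simp: algebra_simps)
  finally show "(\<Sum>i<d. x (flip i A) + of_int \<sigma> * x (flip d (flip i A)))
      = of_int (k - \<sigma>) * (x A + of_int \<sigma> * x (flip d A))" .
qed

lemma cube_adj_eigen_parity:
  assumes "cube_adj_eigen d k x" "odd (k + int d)" "A \<subseteq> {0..<d}"
  shows "x A = 0"
  using assms
proof (induction d arbitrary: x k A)
  case 0
  then have "A = {}" "k \<noteq> 0" by auto
  moreover have "of_int k * x {} = 0" using "0.prems"(1) by (simp add: cube_adj_eigen_def)
  ultimately show ?case by simp
next
  case (Suc d)
  have "x B + of_int \<sigma> * x (flip d B) = 0" if "B \<subseteq> {0..<d}" "\<sigma> \<in> {-1, 1}" for B \<sigma>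
    using Suc.IH[OF cube_adj_eigen_fold[OF Suc.prems(1) that(2)] _ that(1)] Suc.prems(2) that(2)
      by auto
  from this[of _ 1] this[of _ "-1"]
  have vanish: "x B = 0" "x (flip d B) = 0" if "B \<subseteq> {0..<d}" for B
    using that by fastforce+
  have B: "A - {d} \<subseteq> {0..<d}" using Suc.prems(3) by (auto simp: less_Suc_eq)
  show ?case
  proof (cases "d \<in> A")
    case True
    then have "A = flip d (A - {d})" by (auto simp: flip_def)
    then show ?thesis using vanish(2)[OF B] by simp
  next
    case False
    then show ?thesis using vanish(1)[OF B] by simp
  qed
qed

lemma power_minus_one_card_flip:
  assumes "finite A"
  shows "(-1::real) ^ card (flip i A \<inter> S) = (if i \<in> S then -1 else 1) * (-1) ^ card (A \<inter> S)"
proof (cases "i \<in> S")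
  case False
  then have "flip i A \<inter> S = A \<inter> S" unfolding flip_def by auto
  then show ?thesis using False by simp
next
  case True
  have "finite (A \<inter> S)" using assms by simp
  show ?thesis
  proof (cases "i \<in> A")
    case True
    then have "flip i A \<inter> S = (A \<inter> S) - {i}" by (auto simp: flip_def)
    then have "card (A \<inter> S) = Suc (card (flip i A \<inter> S))"
      using \<open>i \<in> S\<close> \<open>i \<in> A\<close> card_Suc_Diff1[OF \<open>finite (A \<inter> S)\<close>, of i] by simp
    then show ?thesis using \<open>i \<in> S\<close> by simp
  next
    case False
    then have "card (flip i A \<inter> S) = Suc (card (A \<inter> S))"
      using \<open>i \<in> S\<close> \<open>finite (A \<inter> S)\<close> by (simp add: flip_def)
    then show ?thesis using \<open>i \<in> S\<close> by simp
  qed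
qed

lemma sum_sign_halves: "(\<Sum>i<2 * m. if i < m then -1 else 1 :: real) = 0" for m :: nat
proof -
  have "(\<Sum>i<2 * m. if i < m then -1 else 1 :: real)
      = (\<Sum>i\<in>{0..<m}. if i < m then -1 else 1) + (\<Sum>i\<in>{m..<2 * m}. if i < m then -1 else 1)"
    unfolding lessThan_atLeast0 by (rule sum.atLeastLessThan_concat[symmetric]) auto
  also have "\<dots> = (\<Sum>i\<in>{0..<m}. -1) + (\<Sum>i\<in>{m..<2 * m}. 1)"
    by (intro arg_cong2[where f = "(+)"] sum.cong) auto
  finally show ?thesis by simp
qed

lemma cube_adj_eigen_character:
  "cube_adj_eigen (2 * m) 0 (\<lambda>A. if A \<subseteq> {0..<2 * m} then (-1) ^ card (A \<inter> {..<m}) else 0)"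
  (is "cube_adj_eigen _ 0 ?g")
  unfolding cube_adj_eigen_def
proof (intro allI impI)
  fix A assume A: "A \<subseteq> {0..<2 * m}"
  then have "finite A" using finite_subset by blast
  have "(\<Sum>i<2 * m. ?g (flip i A)) = (\<Sum>i<2 * m. if i < m then -1 else 1) * ?g A"
    unfolding sum_distrib_right
  proof (rule sum.cong[OF refl])
    fix i assume "i \<in> {..<2 * m}"
    then have "flip i A \<subseteq> {0..<2 * m}" using A flip_subset by auto
    then show "?g (flip i A) = (if i < m then -1 else 1) * ?g A"
      using A power_minus_one_card_flip[OF \<open>finite A\<close>] by simp
  qed
  then show "(\<Sum>i<2 * m. ?g (flip i A)) = of_int 0 * ?g A" by (simp add: sum_sign_halves)
qed

lemma strongly_cospectral_blowup2_cube_iff: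
  assumes "u \<in> cube_V d"
  shows "strongly_cospectral (blowup2_V (cube_V d)) (blowup2_E (cube_E d)) (0, u) (1, u) \<longleftrightarrow> odd d"
proof -
  have sc_iff: "strongly_cospectral (blowup2_V (cube_V d)) (blowup2_E (cube_E d)) (0, u) (1, u)
    \<longleftrightarrow> (\<forall>x\<in>vecs (cube_V d). cube_adj_eigen d 0 x \<longrightarrow> x u = 0)"
    using strongly_cospectral_blowup2_iff_kernel[OF simple_graph_cube regular_cube assms]
      cube_kernel_iff
    by simp
  show ?thesis
  proof (cases "odd d")
    case True
    then show ?thesis
      unfolding sc_iff using cube_adj_eigen_parity[of d 0 _ u] assms by (simp add: cube_V_def)
  next
    case False
    then obtain m where "d = 2 * m" by (metis evenE)
    let ?g = "\<lambda>A. if A \<subseteq> {0..<2 * m} then (-1::real) ^ card (A \<inter> {..<m}) else 0"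
    have "?g \<in> vecs (cube_V d)" "?g u \<noteq> 0"
      using assms \<open>d = 2 * m\<close> by (auto simp: vecs_def cube_V_def)
    then show ?thesis
      unfolding sc_iff using False cube_adj_eigen_character[of m] \<open>d = 2 * m\<close> by blast
  qed
qed

theorem corollary3:
  shows "(\<forall>(V :: 'a set) E (d :: nat) u.
            simple_graph V E \<and> regular V E d \<and> u \<in> V \<longrightarrow>
            (strongly_cospectral (blowup2_V V) (blowup2_E E) (0, u) (1, u)
               \<longleftrightarrow> real d \<notin> eig_support V E u))
       \<and> (\<forall>d u. d \<ge> 1 \<and> u \<in> complete_V (d + 1) \<longrightarrow>
            strongly_cospectral (blowup2_V (complete_V (d + 1))) (blowup2_E (complete_E (d + 1)))
              (0, u) (1, u))
       \<and> (\<forall>n u. n \<ge> 3 \<and> u \<in> cycle_V n \<longrightarrow>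
            (strongly_cospectral (blowup2_V (cycle_V n)) (blowup2_E (cycle_E n)) (0, u) (1, u)
               \<longleftrightarrow> n mod 4 \<noteq> 0))
       \<and> (\<forall>d u. u \<in> cube_V d \<longrightarrow>
            (strongly_cospectral (blowup2_V (cube_V d)) (blowup2_E (cube_E d)) (0, u) (1, u)
               \<longleftrightarrow> odd d))"
  by (intro conjI allI impI; (elim conjE)?;
      rule strongly_cospectral_blowup2_iff_eig_support strongly_cospectral_blowup2_complete
        strongly_cospectral_blowup2_cycle_iff strongly_cospectral_blowup2_cube_iff; simp)

end
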